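(* In the setting below, for all distinct $i,j,k\in\mathbb Z/N\mathbb Z$ we have $\#(P_{ij}\cap Q^+_{jk})\leq2$.
   Context: Setting: $p,q$ distinct primes, $N=p+q$; $M=(m_{ik})_{i,k\in\mathbb Z/N\mathbb Z}$ has entries in $\mathbb Z/pq\mathbb Z$ and $(e^{2\pi i\,m_{ik}/pq})$ is a complex Hadamard matrix (unimodular entries, orthogonal rows). $L_i(k)=m_{ik}$, $L_{ij}=L_j-L_i$. For $d\mid pq$, $d(\mathbb Z/pq\mathbb Z)$ is the subgroup of multiples of $d$. For distinct $i,j$ there is a partition $\mathbb Z/N\mathbb Z=P_{ij}\sqcup Q_{ij}\sqcup R_{ij}$ and $r\in\mathbb Z/pq\mathbb Z$ with: $\#R_{ij}=2$ and $L_{ij}\equiv r$ on $R_{ij}$; $\#P_{ij}=p-1$ and $L_{ij}(P_{ij})=(r+q(\mathbb Z/pq\mathbb Z))\setminus\{r\}$; $\#Q_{ij}=q-1$ and $L_{ij}(Q_{ij})=(r+p(\mathbb Z/pq\mathbb Z))\setminus\{r\}$. This partition is unique ($R_{ij}$ is the pair of indices where $L_{ij}$ takes its unique repeated value). Put $P^+_{ij}=P_{ij}\cup R_{ij}$, $Q^+_{ij}=Q_{ij}\cup R_{ij}$. *)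

theory Defs
  imports "HOL-Analysis.Analysis" "HOL-Number_Theory.Cong"
begin

(* Indices Z/NZ are represented by {..<N}; entries of M are integers read modulo p*q. *)

definition Ldiff :: "(nat \<Rightarrow> nat \<Rightarrow> int) \<Rightarrow> nat \<Rightarrow> nat \<Rightarrow> nat \<Rightarrow> nat \<Rightarrow> nat \<Rightarrow> int" where
  "Ldiff M p q i j k = (M j k - M i k) mod (int (p * q))"

definition is_hadamard :: "(nat \<Rightarrow> nat \<Rightarrow> int) \<Rightarrow> nat \<Rightarrow> nat \<Rightarrow> nat \<Rightarrow> bool" where
  "is_hadamard M p q N \<longleftrightarrow>
     (\<forall>i<N. \<forall>j<N. i \<noteq> j \<longrightarrow>
        (\<Sum>k<N. exp (2 * pi * \<i> * of_int (M i k) / of_nat (p * q))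
                 * cnj (exp (2 * pi * \<i> * of_int (M j k) / of_nat (p * q)))) = 0)"

definition part_data :: "(nat \<Rightarrow> nat \<Rightarrow> int) \<Rightarrow> nat \<Rightarrow> nat \<Rightarrow> nat \<Rightarrow> nat \<Rightarrow> nat
    \<Rightarrow> nat set \<Rightarrow> nat set \<Rightarrow> nat set \<Rightarrow> int \<Rightarrow> bool" where
  "part_data M p q N i j P Q R r \<longleftrightarrow>
     P \<union> Q \<union> R = {..<N} \<and> P \<inter> Q = {} \<and> P \<inter> R = {} \<and> Q \<inter> R = {} \<and>
     r \<in> {0..<int (p*q)} \<and>
     card R = 2 \<and> (\<forall>k\<in>R. Ldiff M p q i j k = r) \<and>
     card P = p - 1 \<and>
     Ldiff M p q i j ` P = {x \<in> {0..<int (p*q)}. [x = r] (mod int q)} - {r} \<and>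
     card Q = q - 1 \<and>
     Ldiff M p q i j ` Q = {x \<in> {0..<int (p*q)}. [x = r] (mod int p)} - {r}"

definition Pset where
  "Pset M p q N i j = (THE P. \<exists>Q R r. part_data M p q N i j P Q R r)"
definition Qset where
  "Qset M p q N i j = (THE Q. \<exists>P R r. part_data M p q N i j P Q R r)"
definition Rset where
  "Rset M p q N i j = (THE R. \<exists>P Q r. part_data M p q N i j P Q R r)"

definition Qplus where
  "Qplus M p q N i j = Qset M p q N i j \<union> Rset M p q N i j"

end

theory Submission
  imports Defs
begin

text \<open>Write \<open>r\<^sub>1, r\<^sub>2, r\<^sub>3\<close> for the repeated values of \<open>L\<^sub>i\<^sub>j, L\<^sub>j\<^sub>k, L\<^sub>i\<^sub>k\<close>.
  Summing over a partition gives \<open>\<Sum>\<^sub>k L\<^sub>i\<^sub>j(k) \<equiv> q r\<^sub>1 (mod p)\<close> for odd \<open>p\<close>, because the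
  residue class of \<open>r\<^sub>1\<close> modulo \<open>q\<close> sums to \<open>0\<close> modulo \<open>p\<close>; as \<open>L\<^sub>i\<^sub>k = L\<^sub>i\<^sub>j + L\<^sub>j\<^sub>k\<close>, this
  yields \<open>r\<^sub>3 \<equiv> r\<^sub>1 + r\<^sub>2 (mod p)\<close>.  For \<open>x \<in> P\<^sub>i\<^sub>j \<inter> Q\<^sup>+\<^sub>j\<^sub>k\<close> we have \<open>L\<^sub>i\<^sub>j(x) \<not>\<equiv> r\<^sub>1\<close> and
  \<open>L\<^sub>j\<^sub>k(x) \<equiv> r\<^sub>2\<close> modulo \<open>p\<close>, hence \<open>L\<^sub>i\<^sub>k(x) \<not>\<equiv> r\<^sub>3 (mod p)\<close>, which forces \<open>x \<in> P\<^sub>i\<^sub>k\<close>.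
  Then \<open>L\<^sub>j\<^sub>k(x)\<close> is fixed both modulo \<open>p\<close> (as \<open>r\<^sub>2\<close>) and modulo \<open>q\<close> (as \<open>r\<^sub>3 - r\<^sub>1\<close>), so
  by the Chinese remainder theorem all such \<open>x\<close> lie in one fibre of \<open>L\<^sub>j\<^sub>k\<close>, which has at
  most two elements.  For \<open>p = 2\<close> already \<open>#P\<^sub>i\<^sub>j = 1\<close>.\<close>

lemma coprime_cong_imp_eq:
  fixes p q :: nat and x y :: int
  assumes "coprime p q"
    and "x \<in> {0..<int (p*q)}" "y \<in> {0..<int (p*q)}"
    and "[x = y] (mod int p)" "[x = y] (mod int q)"
  shows "x = y"
proof -
  have "coprime (int p) (int q)" using assms by simp
  hence "[x = y] (mod int p * int q)" using assms coprime_cong_mult by blast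
  thus ?thesis using assms cong_less_imp_eq_int by auto
qed

lemma residue_class_eq_image:
  fixes p q :: nat and r :: int
  assumes "p > 0" "q > 0"
  shows "{x \<in> {0..<int (p*q)}. [x = r] (mod int q)} = (\<lambda>t. r mod q + int q * t) ` {0..<int p}"
proof (rule set_eqI, rule iffI)
  fix x assume x: "x \<in> {x \<in> {0..<int (p*q)}. [x = r] (mod int q)}"
  hence "x mod q = r mod q" by (simp add: cong_def)
  hence e: "x = r mod q + int q * (x div q)" by (metis mult_div_mod_eq add.commute)
  have d: "int q * (x div int q) + x mod int q = x" by (rule mult_div_mod_eq)
  have "x mod int q \<ge> 0" using assms by simp
  moreover have "x < int q * int p" using x by (simp add: mult.commute)
  ultimately have "int q * (x div int q) < int q * int p" using d by linarith
  hence "x div q < p" using assms by (simp add: mult_less_cancel_left)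
  moreover have "x div q \<ge> 0" using x assms by (simp add: pos_imp_zdiv_nonneg_iff)
  ultimately show "x \<in> (\<lambda>t. r mod q + int q * t) ` {0..<int p}" using e by force
next
  fix x assume "x \<in> (\<lambda>t. r mod q + int q * t) ` {0..<int p}"
  then obtain t where t: "t \<in> {0..<int p}" "x = r mod q + int q * t" by auto
  have r0: "r mod q < q" "r mod q \<ge> 0" using assms by auto
  moreover have "int q * t \<le> int q * (int p - 1)" using t assms by (intro mult_left_mono) auto
  ultimately have "x < int (p*q)" using t by (simp add: algebra_simps)
  moreover have "[x = r] (mod int q)" using t by (simp add: cong_def)
  moreover have "x \<ge> 0" using t r0 by simp
  ultimately show "x \<in> {x \<in> {0..<int (p*q)}. [x = r] (mod int q)}" by auto
qed

lemma card_residue_class: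
  fixes p q :: nat and r :: int
  assumes "p > 0" "q > 0"
  shows "card {x \<in> {0..<int (p*q)}. [x = r] (mod int q)} = p"
proof -
  have "inj_on (\<lambda>t. r mod q + int q * t) {0..<int p}" using assms by (auto simp: inj_on_def)
  thus ?thesis unfolding residue_class_eq_image[OF assms] by (simp add: card_image)
qed

lemma odd_dvd_sum_atLeastLessThan_int:
  fixes p :: nat assumes "odd p"
  shows "int p dvd (\<Sum>t\<in>{0..<int p}. t)"
proof -
  have p1: "p \<ge> 1" using assms by (cases p) auto
  have "{0..<int p} = int ` {0..<p}" by (simp add: image_int_atLeastLessThan)
  hence e: "(\<Sum>t\<in>{0..<int p}. t) = (\<Sum>i\<in>{0..<p}. int i)" by (simp add: sum.reindex)
  have "{0..<p} = {0..p-1}" using p1 by auto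
  hence "2 * (\<Sum>i\<in>{0..<p}. int i) = int (p-1) * (int (p-1) + 1)"
    using double_gauss_sum[of "p-1", where 'a=int] by simp
  also have "\<dots> = int p * (int p - 1)" using p1 by (simp add: of_nat_diff)
  finally have "int p dvd 2 * (\<Sum>t\<in>{0..<int p}. t)" using e by simp
  moreover have "coprime (int p) 2" using assms by (simp add: coprime_commute)
  ultimately show ?thesis using coprime_dvd_mult_right_iff by blast
qed

lemma sum_residue_class_cong_0:
  fixes p q :: nat and r :: int
  assumes "odd p" "q > 0"
  shows "[(\<Sum>x\<in>{x \<in> {0..<int (p*q)}. [x = r] (mod int q)}. x) = 0] (mod int p)"
proof -
  have p0: "p > 0" using assms by (cases p) auto
  have "(\<Sum>x\<in>{x \<in> {0..<int (p*q)}. [x = r] (mod int q)}. x)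
      = (\<Sum>t\<in>{0..<int p}. r mod q + int q * t)"
    unfolding residue_class_eq_image[OF p0 assms(2)]
    using assms(2) by (subst sum.reindex) (auto simp: inj_on_def)
  also have "\<dots> = int p * (r mod q) + int q * (\<Sum>t\<in>{0..<int p}. t)"
    by (simp add: sum.distrib sum_distrib_left)
  finally show ?thesis
    using odd_dvd_sum_atLeastLessThan_int[OF assms(1)] by (simp add: cong_0_iff)
qed

lemma Ldiff_in_range:
  "0 < p * q \<Longrightarrow> Ldiff M p q i j k \<in> {0..<int (p*q)}"
  by (simp add: Ldiff_def)

lemma Ldiff_add_cong:
  "[Ldiff M p q i k x = Ldiff M p q i j x + Ldiff M p q j k x] (mod int (p*q))"
  unfolding Ldiff_def cong_def by (simp add: mod_add_eq)

lemma part_data_cong_both_imp_eq: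
  fixes p q :: nat
  assumes "prime p" "prime q" "p \<noteq> q" and "part_data M p q N i j P Q R r"
    and "[Ldiff M p q i j k = r] (mod int p)" "[Ldiff M p q i j k = r] (mod int q)"
  shows "Ldiff M p q i j k = r"
proof (rule coprime_cong_imp_eq[OF primes_coprime[OF assms(1-3)] Ldiff_in_range _ assms(5,6)])
  show "0 < p * q" using assms(1,2) by (simp add: prime_gt_0_nat)
  show "r \<in> {0..<int (p*q)}" using assms(4) by (simp add: part_data_def)
qed

lemma part_data_sets_eq:
  fixes p q :: nat
  assumes "prime p" "prime q" "p \<noteq> q" and pd: "part_data M p q N i j P Q R r"
  shows "P = {k. k < N \<and> Ldiff M p q i j k \<noteq> r \<and> [Ldiff M p q i j k = r] (mod int q)}"
    and "Q = {k. k < N \<and> Ldiff M p q i j k \<noteq> r \<and> [Ldiff M p q i j k = r] (mod int p)}"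
    and "R = {k. k < N \<and> Ldiff M p q i j k = r}"
proof -
  let ?L = "Ldiff M p q i j"
  have not_both: "\<not> ([?L k = r] (mod int p) \<and> [?L k = r] (mod int q) \<and> ?L k \<noteq> r)" for k
    using part_data_cong_both_imp_eq[OF assms] by blast
  have "?L ` P \<subseteq> {x. x \<noteq> r \<and> [x = r] (mod int q)}" "?L ` Q \<subseteq> {x. x \<noteq> r \<and> [x = r] (mod int p)}"
    using pd by (auto simp: part_data_def)
  hence inP: "k \<in> P \<Longrightarrow> ?L k \<noteq> r \<and> [?L k = r] (mod int q)"
    and inQ: "k \<in> Q \<Longrightarrow> ?L k \<noteq> r \<and> [?L k = r] (mod int p)" for k
    by auto
  have inR: "k \<in> R \<Longrightarrow> ?L k = r" for k using pd by (simp add: part_data_def)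
  have cover: "k < N \<longleftrightarrow> k \<in> P \<or> k \<in> Q \<or> k \<in> R" for k
    using pd by (auto simp: part_data_def)
  show "P = {k. k < N \<and> ?L k \<noteq> r \<and> [?L k = r] (mod int q)}"
    using cover inP inQ inR not_both by blast
  show "Q = {k. k < N \<and> ?L k \<noteq> r \<and> [?L k = r] (mod int p)}"
    using cover inP inQ inR not_both by blast
  show "R = {k. k < N \<and> ?L k = r}"
    using cover inP inQ inR by blast
qed

lemma part_data_inj_on:
  fixes p q :: nat
  assumes "prime p" "prime q" "p \<noteq> q" and pd: "part_data M p q N i j P Q R r"
  shows "inj_on (Ldiff M p q i j) (P \<union> Q)"
proof -
  let ?L = "Ldiff M p q i j"
  have p0: "p > 0" "q > 0" using assms by (simp_all add: prime_gt_0_nat)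
  have fin: "finite P" "finite Q" using pd by (auto simp: part_data_def intro: finite_subset)
  have r: "r \<in> {x \<in> {0..<int (p*q)}. [x = r] (mod int q)}"
    "r \<in> {x \<in> {0..<int (q*p)}. [x = r] (mod int p)}"
    using pd by (auto simp: part_data_def mult.commute)
  have "card (?L ` P) = card P"
    using pd card_residue_class[OF p0, of r] r(1) by (simp add: part_data_def card_Diff_singleton)
  moreover have "card (?L ` Q) = card Q"
    using pd card_residue_class[OF p0(2,1), of r] r(2) by (simp add: part_data_def card_Diff_singleton mult.commute)
  moreover have "?L ` P \<inter> ?L ` Q = {}"
    using part_data_sets_eq(1,2)[OF assms] part_data_cong_both_imp_eq[OF assms] by force
  ultimately show ?thesis
    using fin by (auto simp: inj_on_Un intro: eq_card_imp_inj_on)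
qed

lemma part_data_card_fibre_le_1:
  fixes p q :: nat
  assumes "prime p" "prime q" "p \<noteq> q" and pd: "part_data M p q N i j P Q R r"
    and "v \<noteq> r"
  shows "card {k. k < N \<and> Ldiff M p q i j k = v} \<le> 1"
proof -
  have "{k. k < N \<and> Ldiff M p q i j k = v} \<subseteq> P \<union> Q"
    using part_data_sets_eq(3)[OF assms(1-4)] pd \<open>v \<noteq> r\<close> by (auto simp: part_data_def)
  with part_data_inj_on[OF assms(1-4)] show ?thesis
    by (auto simp: card_le_Suc0_iff_eq inj_on_def)
qed

lemma part_data_card_fibre_le_2:
  fixes p q :: nat
  assumes "prime p" "prime q" "p \<noteq> q" and pd: "part_data M p q N i j P Q R r"
  shows "card {k. k < N \<and> Ldiff M p q i j k = v} \<le> 2"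
proof (cases "v = r")
  case True
  then show ?thesis using part_data_sets_eq(3)[OF assms] pd by (simp add: part_data_def)
next
  case False
  then show ?thesis using part_data_card_fibre_le_1[OF assms] by fastforce
qed

lemma part_data_unique:
  fixes p q :: nat
  assumes "prime p" "prime q" "p \<noteq> q"
    and pd: "part_data M p q N i j P Q R r" and pd': "part_data M p q N i j P' Q' R' r'"
  shows "P' = P \<and> Q' = Q \<and> R' = R"
proof -
  have "card {k. k < N \<and> Ldiff M p q i j k = r} = 2"
    using part_data_sets_eq(3)[OF assms(1-4)] pd by (simp add: part_data_def)
  hence "r' = r" using part_data_card_fibre_le_1[OF assms(1-3) pd'] by fastforce
  thus ?thesis using part_data_sets_eq[OF assms(1-4)] part_data_sets_eq[OF assms(1-3) pd'] by simp
qed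

lemma Pset_Qset_Rset_eq:
  fixes p q :: nat
  assumes "prime p" "prime q" "p \<noteq> q" and pd: "part_data M p q N i j P Q R r"
  shows "Pset M p q N i j = P" "Qset M p q N i j = Q" "Rset M p q N i j = R"
  unfolding Pset_def Qset_def Rset_def
  by (rule the_equality; use pd part_data_unique[OF assms] in blast)+

lemma part_data_sum_Ldiff_cong:
  fixes p q :: nat
  assumes "prime p" "prime q" "p \<noteq> q" and pd: "part_data M p q N i j P Q R r"
    and "odd p"
  shows "[(\<Sum>k<N. Ldiff M p q i j k) = int q * r] (mod int p)"
proof -
  let ?L = "Ldiff M p q i j" and ?V = "{x \<in> {0..<int (p*q)}. [x = r] (mod int q)}"
  have q0: "q > 0" using assms by (simp add: prime_gt_0_nat)
  have fin: "finite P" "finite Q" "finite R" using pd by (auto simp: part_data_def intro: finite_subset)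
  have "{..<N} = P \<union> Q \<union> R" "P \<inter> Q = {}" "(P \<union> Q) \<inter> R = {}"
    using pd by (auto simp: part_data_def)
  hence "(\<Sum>k<N. ?L k) = (\<Sum>k\<in>P. ?L k) + (\<Sum>k\<in>Q. ?L k) + (\<Sum>k\<in>R. ?L k)"
    using fin by (simp add: sum.union_disjoint)
  moreover have "(\<Sum>k\<in>P. ?L k) = (\<Sum>x\<in>?V. x) - r"
  proof -
    have "(\<Sum>k\<in>P. ?L k) = (\<Sum>x\<in>?L ` P. x)"
      using part_data_inj_on[OF assms(1-4)] by (simp add: sum.reindex inj_on_Un)
    also have "?L ` P = ?V - {r}" using pd by (simp add: part_data_def)
    also have "(\<Sum>x\<in>?V - {r}. x) = (\<Sum>x\<in>?V. x) - r"
    proof -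
      have "finite ?V" by (rule finite_subset[of _ "{0..<int (p*q)}"]) auto
      moreover have "r \<in> ?V" using pd by (simp add: part_data_def)
      ultimately show ?thesis by (simp add: sum_diff1)
    qed
    finally show ?thesis .
  qed
  moreover have "[(\<Sum>k\<in>Q. ?L k) = (int q - 1) * r] (mod int p)"
  proof -
    have "[(\<Sum>k\<in>Q. ?L k) = (\<Sum>k\<in>Q. r)] (mod int p)"
      using part_data_sets_eq(2)[OF assms(1-4)] by (intro cong_sum) auto
    thus ?thesis using pd q0 by (simp add: part_data_def of_nat_diff)
  qed
  moreover have "(\<Sum>k\<in>R. ?L k) = 2 * r" using pd by (simp add: part_data_def)
  moreover have "[(\<Sum>x\<in>?V. x) = 0] (mod int p)"
    using sum_residue_class_cong_0[OF \<open>odd p\<close> q0] .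
  ultimately have "[(\<Sum>k<N. ?L k) = (0 - r) + (int q - 1) * r + 2 * r] (mod int p)"
    by (simp only:) (intro cong_add cong_diff cong_refl)
  thus ?thesis by (simp add: algebra_simps)
qed

lemma part_data_repeated_value_add_cong:
  fixes p q :: nat
  assumes pr: "prime p" "prime q" "p \<noteq> q" and "odd p"
    and d1: "part_data M p q N i j P1 Q1 R1 r1"
    and d2: "part_data M p q N j k P2 Q2 R2 r2"
    and d3: "part_data M p q N i k P3 Q3 R3 r3"
  shows "[r3 = r1 + r2] (mod int p)"
proof -
  have "[int q * r3 = (\<Sum>x<N. Ldiff M p q i k x)] (mod int p)"
    using part_data_sum_Ldiff_cong[OF pr d3 \<open>odd p\<close>] by (rule cong_sym)
  also have "[(\<Sum>x<N. Ldiff M p q i k x)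
      = (\<Sum>x<N. Ldiff M p q i j x) + (\<Sum>x<N. Ldiff M p q j k x)] (mod int p)"
    unfolding sum.distrib[symmetric]
    by (intro cong_sum cong_dvd_modulus[OF Ldiff_add_cong]) simp
  also have "[(\<Sum>x<N. Ldiff M p q i j x) + (\<Sum>x<N. Ldiff M p q j k x)
      = int q * r1 + int q * r2] (mod int p)"
    using part_data_sum_Ldiff_cong[OF pr d1 \<open>odd p\<close>] part_data_sum_Ldiff_cong[OF pr d2 \<open>odd p\<close>]
    by (rule cong_add)
  finally have "[int q * r3 = int q * (r1 + r2)] (mod int p)" by (simp add: algebra_simps)
  moreover have "coprime (int q) (int p)" using pr by (simp add: primes_coprime)
  ultimately show ?thesis using cong_mult_lcancel by blast
qed

lemma Ldiff_congs_on_P_inter_Qplus: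
  fixes p q :: nat
  assumes pr: "prime p" "prime q" "p \<noteq> q"
    and d1: "part_data M p q N i j P1 Q1 R1 r1"
    and d2: "part_data M p q N j k P2 Q2 R2 r2"
    and d3: "part_data M p q N i k P3 Q3 R3 r3"
    and r3: "[r3 = r1 + r2] (mod int p)"
    and x: "x \<in> P1" "x \<in> Q2 \<union> R2"
  shows "[Ldiff M p q j k x = r2] (mod int p)" "[Ldiff M p q j k x = r3 - r1] (mod int q)"
proof -
  let ?L1 = "Ldiff M p q i j" and ?L2 = "Ldiff M p q j k" and ?L3 = "Ldiff M p q i k"
  have add_p: "[?L3 x = ?L1 x + ?L2 x] (mod int p)" and add_q: "[?L3 x = ?L1 x + ?L2 x] (mod int q)"
    by (intro cong_dvd_modulus[OF Ldiff_add_cong]; simp)+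
  have x1: "x < N" "?L1 x \<noteq> r1" "[?L1 x = r1] (mod int q)"
    using x(1) part_data_sets_eq(1)[OF pr d1] by auto
  show L2p: "[?L2 x = r2] (mod int p)"
    using x(2) part_data_sets_eq(2,3)[OF pr d2] by auto
  have "\<not> [?L3 x = r3] (mod int p)"
  proof
    assume "[?L3 x = r3] (mod int p)"
    have "[?L1 x + r2 = ?L1 x + ?L2 x] (mod int p)" using L2p by (simp add: cong_sym cong_add_lcancel)
    also have "[?L1 x + ?L2 x = ?L3 x] (mod int p)" using add_p by (rule cong_sym)
    also have "[?L3 x = r3] (mod int p)" by fact
    also have "[r3 = r1 + r2] (mod int p)" by (rule r3)
    finally have "[?L1 x = r1] (mod int p)" by (simp add: cong_add_rcancel)
    thus False using x1 part_data_cong_both_imp_eq[OF pr d1] by blast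
  qed
  moreover have "x \<in> P3 \<union> Q3 \<union> R3" using x1(1) d3 by (simp add: part_data_def)
  ultimately have "x \<in> P3" using part_data_sets_eq(2,3)[OF pr d3] by auto
  hence "[?L3 x = r3] (mod int q)" using part_data_sets_eq(1)[OF pr d3] by auto
  moreover have "[?L2 x + r1 = ?L3 x] (mod int q)"
    using add_q x1(3) by (metis add.commute cong_add_lcancel cong_sym cong_trans)
  ultimately have "[?L2 x + r1 = (r3 - r1) + r1] (mod int q)" by (simp add: cong_trans)
  thus "[?L2 x = r3 - r1] (mod int q)" by (simp only: cong_add_rcancel)
qed

lemma part_data_card_cong_fibre_le_2:
  fixes p q :: nat
  assumes pr: "prime p" "prime q" "p \<noteq> q" and pd: "part_data M p q N i j P Q R r"
  shows "card {x. x < N \<and> [Ldiff M p q i j x = a] (mod int p) \<and> [Ldiff M p q i j x = b] (mod int q)} \<le> 2"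
    (is "card ?S \<le> 2")
proof (cases "?S = {}")
  case False
  then obtain x0 where x0: "x0 \<in> ?S" by blast
  have "0 < p * q" using pr by (simp add: prime_gt_0_nat)
  have "Ldiff M p q i j x = Ldiff M p q i j x0" if "x \<in> ?S" for x
  proof (rule coprime_cong_imp_eq[OF primes_coprime[OF pr] Ldiff_in_range Ldiff_in_range])
    from that x0 show "[Ldiff M p q i j x = Ldiff M p q i j x0] (mod int p)"
      "[Ldiff M p q i j x = Ldiff M p q i j x0] (mod int q)"
      by (auto dest: cong_sym elim: cong_trans)
  qed fact+
  hence "?S \<subseteq> {x. x < N \<and> Ldiff M p q i j x = Ldiff M p q i j x0}" by blast
  hence "card ?S \<le> card {x. x < N \<and> Ldiff M p q i j x = Ldiff M p q i j x0}"
    by (intro card_mono) auto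
  also have "\<dots> \<le> 2" by (rule part_data_card_fibre_le_2[OF pr pd])
  finally show ?thesis .
next
  case True
  show ?thesis unfolding True by simp
qed

theorem lemma6p3:
  fixes p q N :: nat and M :: "nat \<Rightarrow> nat \<Rightarrow> int" and i j k :: nat
  assumes "prime p" and "prime q" and "p \<noteq> q" and "N = p + q"
    and "is_hadamard M p q N"
    and "\<forall>a<N. \<forall>b<N. a \<noteq> b \<longrightarrow> (\<exists>P Q R r. part_data M p q N a b P Q R r)"
    and "i < N" and "j < N" and "k < N"
    and "i \<noteq> j" and "j \<noteq> k" and "i \<noteq> k"
  shows "card (Pset M p q N i j \<inter> Qplus M p q N j k) \<le> 2"
proof -
  note pr = assms(1-3)
  obtain P1 Q1 R1 r1 where d1: "part_data M p q N i j P1 Q1 R1 r1" using assms by blast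
  obtain P2 Q2 R2 r2 where d2: "part_data M p q N j k P2 Q2 R2 r2" using assms by blast
  obtain P3 Q3 R3 r3 where d3: "part_data M p q N i k P3 Q3 R3 r3" using assms by blast
  have "Pset M p q N i j \<inter> Qplus M p q N j k = P1 \<inter> (Q2 \<union> R2)"
    unfolding Qplus_def using Pset_Qset_Rset_eq[OF pr d1] Pset_Qset_Rset_eq[OF pr d2] by simp
  moreover have "card (P1 \<inter> (Q2 \<union> R2)) \<le> 2"
  proof (cases "p = 2")
    case True
    have "finite P1" using d1 by (auto simp: part_data_def intro: finite_subset)
    hence "card (P1 \<inter> (Q2 \<union> R2)) \<le> card P1" by (intro card_mono) auto
    thus ?thesis using d1 True by (simp add: part_data_def)
  next
    case False
    hence "odd p" using prime_odd_nat[OF pr(1)] prime_ge_2_nat[OF pr(1)] by simp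
    hence r3: "[r3 = r1 + r2] (mod int p)"
      using part_data_repeated_value_add_cong[OF pr _ d1 d2 d3] by blast
    have "P1 \<inter> (Q2 \<union> R2) \<subseteq> {x. x < N \<and> [Ldiff M p q j k x = r2] (mod int p)
        \<and> [Ldiff M p q j k x = r3 - r1] (mod int q)}"
      using Ldiff_congs_on_P_inter_Qplus[OF pr d1 d2 d3 r3] d1 by (auto simp: part_data_def)
    hence "card (P1 \<inter> (Q2 \<union> R2)) \<le> card {x. x < N \<and> [Ldiff M p q j k x = r2] (mod int p)
        \<and> [Ldiff M p q j k x = r3 - r1] (mod int q)}"
      by (intro card_mono) auto
    also have "\<dots> \<le> 2" by (rule part_data_card_cong_fibre_le_2[OF pr d2])
    finally show ?thesis .
  qed
  ultimately show ?thesis by simp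
qed

end
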